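(* Let $\mathbf A$ be a residuated semigroup satisfying $(x/x)y=y(x/x)$ for all $x,y\in A$, and write $1_x:=x/x$. Then for all $x,y\in A$: \[ 1_x\le 1_{xy},\ 1_y\le 1_{xy},\ 1_x\le 1_{x/y},\ 1_y\le 1_{x/y},\ 1_x\le 1_{y\backslash x},\ 1_y\le 1_{y\backslash x}, \] and consequently $1_x1_y\le 1_{xy}$, $1_x1_y\le 1_{x/y}$, $1_x1_y\le 1_{y\backslash x}$.
   Context: A residuated semigroup is a structure $\langle A,\le,\cdot,\backslash,/\rangle$ where $\langle A,\le\rangle$ is a poset, $\langle A,\cdot\rangle$ is a semigroup (we write $xy$ for $x\cdot y$), and for all $x,y,z$: $xy\le z\iff x\le z/y\iff y\le x\backslash z$. *)

theory Defs
  imports Main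
begin

definition residuated_semigroup ::
  "('a \<Rightarrow> 'a \<Rightarrow> bool) \<Rightarrow> ('a \<Rightarrow> 'a \<Rightarrow> 'a) \<Rightarrow> ('a \<Rightarrow> 'a \<Rightarrow> 'a) \<Rightarrow> ('a \<Rightarrow> 'a \<Rightarrow> 'a) \<Rightarrow> bool"
where
  "residuated_semigroup le m ld rd \<longleftrightarrow>
     class.order le (\<lambda>x y. le x y \<and> x \<noteq> y) \<and>
     (\<forall>x y z. m (m x y) z = m x (m y z)) \<and>
     (\<forall>x y z. (le (m x y) z \<longleftrightarrow> le x (rd z y)) \<and> (le (m x y) z \<longleftrightarrow> le y (ld x z)))"

end

theory Submission
  imports Defs
begin

text \<open>Writing \<open>1\<^sub>u = u/u\<close>, residuation gives \<open>a \<le> 1\<^sub>u \<longleftrightarrow> a u \<le> u\<close>, so each inequality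
\<open>1\<^sub>x \<le> 1\<^sub>t\<close> amounts to showing \<open>1\<^sub>x t \<le> t\<close> for the term \<open>t\<close>; this follows from
\<open>1\<^sub>x x \<le> x\<close> and monotonicity, using centrality of \<open>1\<^sub>x\<close> to move it next to the
occurrence of \<open>x\<close> inside \<open>t\<close>. The products \<open>1\<^sub>x 1\<^sub>y\<close> are then handled by the fact that
the elements below \<open>1\<^sub>t\<close> are closed under multiplication.\<close>

locale residuated =
  fixes le :: "'a \<Rightarrow> 'a \<Rightarrow> bool" (infix "\<sqsubseteq>" 50)
    and m :: "'a \<Rightarrow> 'a \<Rightarrow> 'a" (infixl "\<cdot>" 70)
    and ld rd :: "'a \<Rightarrow> 'a \<Rightarrow> 'a"
  assumes residuated_semigroup: "residuated_semigroup le m ld rd"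
begin

abbreviation one :: "'a \<Rightarrow> 'a" where
  "one x \<equiv> rd x x"

lemma le_refl: "x \<sqsubseteq> x"
  using residuated_semigroup
  unfolding residuated_semigroup_def class.order_def class.preorder_def by blast

lemma le_trans [trans]: "x \<sqsubseteq> y \<Longrightarrow> y \<sqsubseteq> z \<Longrightarrow> x \<sqsubseteq> z"
  using residuated_semigroup
  unfolding residuated_semigroup_def class.order_def class.preorder_def by blast

lemma mult_assoc: "x \<cdot> y \<cdot> z = x \<cdot> (y \<cdot> z)"
  using residuated_semigroup unfolding residuated_semigroup_def by blast

lemma le_rd_iff: "x \<sqsubseteq> rd z y \<longleftrightarrow> x \<cdot> y \<sqsubseteq> z"
  using residuated_semigroup unfolding residuated_semigroup_def by blast

lemma le_ld_iff: "y \<sqsubseteq> ld x z \<longleftrightarrow> x \<cdot> y \<sqsubseteq> z"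
  using residuated_semigroup unfolding residuated_semigroup_def by blast

lemma rd_mult_le: "rd x y \<cdot> y \<sqsubseteq> x"
  using le_rd_iff le_refl by blast

lemma mult_ld_le: "y \<cdot> ld y x \<sqsubseteq> x"
  using le_ld_iff le_refl by blast

lemma one_mult_le: "one x \<cdot> x \<sqsubseteq> x"
  by (rule rd_mult_le)

lemma mult_right_mono: "a \<sqsubseteq> b \<Longrightarrow> a \<cdot> y \<sqsubseteq> b \<cdot> y"
  using le_rd_iff le_refl le_trans by metis

lemma mult_left_mono: "a \<sqsubseteq> b \<Longrightarrow> y \<cdot> a \<sqsubseteq> y \<cdot> b"
  using le_ld_iff le_refl le_trans by metis

lemma le_one_mult_closed:
  assumes "a \<sqsubseteq> one z" and "b \<sqsubseteq> one z"
  shows "a \<cdot> b \<sqsubseteq> one z"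
proof -
  have "a \<cdot> b \<cdot> z = a \<cdot> (b \<cdot> z)" by (rule mult_assoc)
  also have "a \<cdot> (b \<cdot> z) \<sqsubseteq> a \<cdot> z"
    using assms(2) le_rd_iff mult_left_mono by blast
  finally have "a \<cdot> b \<cdot> z \<sqsubseteq> a \<cdot> z" .
  then show ?thesis
    using assms(1) le_rd_iff le_trans by blast
qed

lemma one_le_one_mult_left: "one x \<sqsubseteq> one (x \<cdot> y)"
  using mult_right_mono [OF one_mult_le, of x y] by (simp add: le_rd_iff mult_assoc)

lemma one_le_one_rd_left: "one x \<sqsubseteq> one (rd x y)"
proof -
  have "one x \<cdot> rd x y \<cdot> y \<sqsubseteq> one x \<cdot> x"
    using mult_left_mono [OF rd_mult_le] by (simp add: mult_assoc)
  then have "one x \<cdot> rd x y \<cdot> y \<sqsubseteq> x"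
    using one_mult_le le_trans by blast
  then show ?thesis
    by (simp add: le_rd_iff)
qed

end

locale residuated_central_units = residuated +
  assumes one_central: "\<forall>x y. one x \<cdot> y = y \<cdot> one x"
begin

lemma one_commute: "one x \<cdot> y = y \<cdot> one x"
  using one_central by blast

lemma one_le_one_mult_right: "one y \<sqsubseteq> one (x \<cdot> y)"
proof -
  have "one y \<cdot> (x \<cdot> y) = x \<cdot> (one y \<cdot> y)"
    by (metis mult_assoc one_commute)
  also have "\<dots> \<sqsubseteq> x \<cdot> y"
    using mult_left_mono [OF one_mult_le] .
  finally show ?thesis
    by (simp add: le_rd_iff)
qed

lemma one_le_one_rd_right: "one y \<sqsubseteq> one (rd x y)"
proof -
  have "one y \<cdot> rd x y \<cdot> y = rd x y \<cdot> (one y \<cdot> y)"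
    by (metis mult_assoc one_commute)
  also have "\<dots> \<sqsubseteq> rd x y \<cdot> y"
    using mult_left_mono [OF one_mult_le] .
  also have "\<dots> \<sqsubseteq> x"
    by (rule rd_mult_le)
  finally show ?thesis
    by (simp add: le_rd_iff)
qed

lemma one_le_one_ld_right: "one x \<sqsubseteq> one (ld y x)"
proof -
  have "y \<cdot> (one x \<cdot> ld y x) = one x \<cdot> (y \<cdot> ld y x)"
    by (metis mult_assoc one_commute)
  also have "\<dots> \<sqsubseteq> one x \<cdot> x"
    using mult_left_mono [OF mult_ld_le] .
  also have "\<dots> \<sqsubseteq> x"
    by (rule one_mult_le)
  finally show ?thesis
    by (simp add: le_rd_iff flip: le_ld_iff)
qed

lemma one_le_one_ld_left: "one y \<sqsubseteq> one (ld y x)"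
proof -
  have "y \<cdot> (one y \<cdot> ld y x) = one y \<cdot> y \<cdot> ld y x"
    by (metis mult_assoc one_commute)
  also have "\<dots> \<sqsubseteq> y \<cdot> ld y x"
    using mult_right_mono [OF one_mult_le] .
  also have "\<dots> \<sqsubseteq> x"
    by (rule mult_ld_le)
  finally show ?thesis
    by (simp add: le_rd_iff flip: le_ld_iff)
qed

end

theorem lemma3p3:
  fixes le :: "'a \<Rightarrow> 'a \<Rightarrow> bool" and m ld rd :: "'a \<Rightarrow> 'a \<Rightarrow> 'a"
  assumes "residuated_semigroup le m ld rd"
    and "\<forall>x y. m (rd x x) y = m y (rd x x)"
  shows "\<forall>x y.
     le (rd x x) (rd (m x y) (m x y)) \<and>
     le (rd y y) (rd (m x y) (m x y)) \<and>
     le (rd x x) (rd (rd x y) (rd x y)) \<and>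
     le (rd y y) (rd (rd x y) (rd x y)) \<and>
     le (rd x x) (rd (ld y x) (ld y x)) \<and>
     le (rd y y) (rd (ld y x) (ld y x)) \<and>
     le (m (rd x x) (rd y y)) (rd (m x y) (m x y)) \<and>
     le (m (rd x x) (rd y y)) (rd (rd x y) (rd x y)) \<and>
     le (m (rd x x) (rd y y)) (rd (ld y x) (ld y x))"
proof -
  interpret residuated_central_units le m ld rd
    using assms by unfold_locales
  show ?thesis
    by (blast intro: le_one_mult_closed one_le_one_mult_left one_le_one_mult_right
        one_le_one_rd_left one_le_one_rd_right one_le_one_ld_left one_le_one_ld_right)
qed

end
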